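(* Let $L=(l_1,\dots,l_n)$, $n\ge 4$, be a generic length vector satisfying the strict triangle inequality, and let $l_a\ge l_b\ge l_c$ be its three largest entries (for distinct indices $a,b,c$). Suppose $l_b+l_c>|L|/2$. Then for every vertex $(I,J,K)$ of $\Gamma(L)$, the vertices $(I,J,K)$ and $(J,I,K)$ lie in different connected components of $\Gamma(L)$; i.e. no path in $\Gamma(L)$ connects them.
   Context: Let $n\ge 4$ and $L=(l_1,\dots,l_n)$ be positive reals with $l_i<\sum_{j\ne i}l_j$ for every $i$ (strict triangle inequality), and generic: there is no $J\subseteq[n]$ with $\sum_{i\in J}l_i=\sum_{i\notin J}l_i$. Here $[n]=\{1,\dots,n\}$ and $|L|=\sum_{i=1}^n l_i$. A set $I\subseteq[n]$ is short if $\sum_{i\in I}l_i<|L|/2$ and long otherwise. A cyclically ordered partition of $[n]$ into $k$ parts is a sequence $(A_1,\dots,A_k)$ of pairwise disjoint nonempty sets with union $[n]$, considered up to cyclic shifts $(A_1,\dots,A_k)\sim(A_2,\dots,A_k,A_1)$; there is no ordering inside a part. It is admissible if every part is short. The graph $\Gamma(L)$ has as vertices the admissible cyclically ordered partitions of $[n]$ into 3 parts, written $(I,J,K)$, and as edges the admissible cyclically ordered partitions into 4 parts $(A,B,C,D)$; such an edge is incident to each of the partitions $(A\cup B,C,D)$, $(A,B\cup C,D)$, $(A,B,C\cup D)$, $(D\cup A,B,C)$ that is admissible. Equivalently, two vertices are adjacent iff one is obtained from the other by moving a nonempty proper subset of one part into another part. The mirror image of a vertex $(I,J,K)$ is the vertex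 $(J,I,K)$ (same parts, reversed cyclic order). (The condition $l_b+l_c>|L|/2$ is equivalent to disconnectedness of the moduli space of planar configurations of $L$.) *)

theory Defs
  imports Complex_Main
begin

definition total :: "(nat \<Rightarrow> real) \<Rightarrow> nat \<Rightarrow> real" where
  "total L n = (\<Sum>i\<in>{1..n}. L i)"

definition short :: "(nat \<Rightarrow> real) \<Rightarrow> nat \<Rightarrow> nat set \<Rightarrow> bool" where
  "short L n I \<longleftrightarrow> (\<Sum>i\<in>I. L i) < total L n / 2"

text \<open>Admissible ordered partition into 3 parts (a representative of a cyclically ordered one).\<close>
definition adm3 :: "(nat \<Rightarrow> real) \<Rightarrow> nat \<Rightarrow> nat set \<times> nat set \<times> nat set \<Rightarrow> bool" where
  "adm3 L n t = (case t of (I, J, K) \<Rightarrow>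
      I \<noteq> {} \<and> J \<noteq> {} \<and> K \<noteq> {} \<and>
      I \<inter> J = {} \<and> J \<inter> K = {} \<and> I \<inter> K = {} \<and>
      I \<union> J \<union> K = {1..n} \<and>
      short L n I \<and> short L n J \<and> short L n K)"

definition adm4 :: "(nat \<Rightarrow> real) \<Rightarrow> nat \<Rightarrow> nat set \<Rightarrow> nat set \<Rightarrow> nat set \<Rightarrow> nat set \<Rightarrow> bool" where
  "adm4 L n A B C D \<longleftrightarrow>
      A \<noteq> {} \<and> B \<noteq> {} \<and> C \<noteq> {} \<and> D \<noteq> {} \<and>
      A \<inter> B = {} \<and> A \<inter> C = {} \<and> A \<inter> D = {} \<and>
      B \<inter> C = {} \<and> B \<inter> D = {} \<and> C \<inter> D = {} \<and>
      A \<union> B \<union> C \<union> D = {1..n} \<and>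
      short L n A \<and> short L n B \<and> short L n C \<and> short L n D"

definition cyc_eq :: "'a \<times> 'a \<times> 'a \<Rightarrow> 'a \<times> 'a \<times> 'a \<Rightarrow> bool" where
  "cyc_eq s t = (case t of (I, J, K) \<Rightarrow> s = (I, J, K) \<or> s = (J, K, I) \<or> s = (K, I, J))"

definition merges :: "nat set \<Rightarrow> nat set \<Rightarrow> nat set \<Rightarrow> nat set \<Rightarrow> (nat set \<times> nat set \<times> nat set) set" where
  "merges A B C D = {(A \<union> B, C, D), (A, B \<union> C, D), (A, B, C \<union> D), (D \<union> A, B, C)}"

text \<open>Adjacency in Gamma(L), on representatives: both vertices are admissible merges
  of one admissible cyclically ordered 4-partition (an edge), up to cyclic shift.\<close>
definition gamma_adj :: "(nat \<Rightarrow> real) \<Rightarrow> nat \<Rightarrow> nat set \<times> nat set \<times> nat set \<Rightarrow> nat set \<times> nat set \<times> nat set \<Rightarrow> bool" where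
  "gamma_adj L n v w \<longleftrightarrow> adm3 L n v \<and> adm3 L n w \<and>
     (\<exists>A B C D m1 m2. adm4 L n A B C D \<and> m1 \<in> merges A B C D \<and> m2 \<in> merges A B C D \<and>
        adm3 L n m1 \<and> adm3 L n m2 \<and> cyc_eq v m1 \<and> cyc_eq w m2)"

text \<open>Two representatives lie in the same connected component of Gamma(L):
  joined by a finite chain of cyclic re-representations and edges.\<close>
definition gamma_connected :: "(nat \<Rightarrow> real) \<Rightarrow> nat \<Rightarrow> nat set \<times> nat set \<times> nat set \<Rightarrow> nat set \<times> nat set \<times> nat set \<Rightarrow> bool" where
  "gamma_connected L n v w \<longleftrightarrow>
     (\<lambda>x y. (adm3 L n x \<and> cyc_eq x y) \<or> gamma_adj L n x y)\<^sup>*\<^sup>* v w"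

end

theory Submission
  imports Defs
begin

text \<open>Any two of the three longest sides together are long, so every admissible partition puts
  \<open>a\<close>, \<open>b\<close>, \<open>c\<close> into three different parts. The cyclic order in which the parts containing
  \<open>a\<close>, \<open>b\<close>, \<open>c\<close> occur is then an invariant of cyclic shifts and of the edges of \<open>\<Gamma>(L)\<close>
  (merging two adjacent parts of a 4-partition never changes it), while passing to the mirror
  image reverses it.\<close>

definition at_most_one_of :: "'a \<Rightarrow> 'a \<Rightarrow> 'a \<Rightarrow> 'a set \<Rightarrow> bool" where
  "at_most_one_of a b c X \<longleftrightarrow> \<not> (a \<in> X \<and> b \<in> X) \<and> \<not> (a \<in> X \<and> c \<in> X) \<and> \<not> (b \<in> X \<and> c \<in> X)"

definition splits :: "'a \<Rightarrow> 'a \<Rightarrow> 'a \<Rightarrow> 'a set \<times> 'a set \<times> 'a set \<Rightarrow> bool" where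
  "splits a b c t = (case t of (I, J, K) \<Rightarrow>
     at_most_one_of a b c I \<and> at_most_one_of a b c J \<and> at_most_one_of a b c K)"

definition cyc_order :: "'a \<Rightarrow> 'a \<Rightarrow> 'a \<Rightarrow> 'a set \<times> 'a set \<times> 'a set \<Rightarrow> bool" where
  "cyc_order a b c t = (case t of (I, J, K) \<Rightarrow>
     (a \<in> I \<and> b \<in> J \<and> c \<in> K) \<or> (a \<in> J \<and> b \<in> K \<and> c \<in> I) \<or> (a \<in> K \<and> b \<in> I \<and> c \<in> J))"

definition pairwise_long :: "(nat \<Rightarrow> real) \<Rightarrow> nat \<Rightarrow> nat \<Rightarrow> nat \<Rightarrow> nat \<Rightarrow> bool" where
  "pairwise_long L n a b c \<longleftrightarrow>
     \<not> short L n {a, b} \<and> \<not> short L n {a, c} \<and> \<not> short L n {b, c}"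

lemma short_subset:
  assumes nonneg: "\<forall>i\<in>{1..n}. L i \<ge> 0" and "T \<subseteq> S" "S \<subseteq> {1..n}" "short L n S"
  shows "short L n T"
proof -
  have "finite S" using \<open>S \<subseteq> {1..n}\<close> finite_subset by blast
  then have "(\<Sum>i\<in>T. L i) \<le> (\<Sum>i\<in>S. L i)"
    using assms by (intro sum_mono2) auto
  then show ?thesis using \<open>short L n S\<close> unfolding short_def by linarith
qed

lemma short_at_most_one_of:
  assumes "\<forall>i\<in>{1..n}. L i \<ge> 0" "pairwise_long L n a b c" "X \<subseteq> {1..n}" "short L n X"
  shows "at_most_one_of a b c X"
proof -
  have "\<not> {x, y} \<subseteq> X" if "\<not> short L n {x, y}" for x y
    using short_subset[OF assms(1) _ assms(3,4)] that by blast
  then show ?thesis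
    using assms(2) unfolding at_most_one_of_def pairwise_long_def by blast
qed

lemma adm3_splits:
  assumes "\<forall>i\<in>{1..n}. L i \<ge> 0" "pairwise_long L n a b c" "adm3 L n t"
  shows "splits a b c t"
proof (cases t)
  case (fields I J K)
  with assms(3) have "I \<subseteq> {1..n}" "J \<subseteq> {1..n}" "K \<subseteq> {1..n}"
      and "short L n I" "short L n J" "short L n K"
    unfolding adm3_def by auto
  then show ?thesis
    unfolding splits_def fields using short_at_most_one_of[OF assms(1,2)] by blast
qed

lemma cyc_eq_cyc_order: "cyc_eq s t \<Longrightarrow> cyc_order a b c s = cyc_order a b c t"
  unfolding cyc_eq_def cyc_order_def by (cases t) auto

lemma merges_cyc_order:
  assumes "a \<in> A \<union> B \<union> C \<union> D" "b \<in> A \<union> B \<union> C \<union> D" "c \<in> A \<union> B \<union> C \<union> D"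
    and disj: "A \<inter> B = {}" "A \<inter> C = {}" "A \<inter> D = {}" "B \<inter> C = {}" "B \<inter> D = {}" "C \<inter> D = {}"
    and "m1 \<in> merges A B C D" "m2 \<in> merges A B C D"
    and "splits a b c m1" "splits a b c m2"
  shows "cyc_order a b c m1 = cyc_order a b c m2"
proof -
  have part: "(x \<in> A \<and> x \<notin> B \<and> x \<notin> C \<and> x \<notin> D) \<or> (x \<notin> A \<and> x \<in> B \<and> x \<notin> C \<and> x \<notin> D) \<or>
      (x \<notin> A \<and> x \<notin> B \<and> x \<in> C \<and> x \<notin> D) \<or> (x \<notin> A \<and> x \<notin> B \<and> x \<notin> C \<and> x \<in> D)"
    if "x \<in> A \<union> B \<union> C \<union> D" for x
    using that disj by blast
  show ?thesis
    using part[OF assms(1)] part[OF assms(2)] part[OF assms(3)] assms(10-13)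
    unfolding merges_def cyc_order_def splits_def at_most_one_of_def
    by (elim disjE conjE insertE emptyE) simp_all
qed

lemma gamma_adj_cyc_order:
  assumes "\<forall>i\<in>{1..n}. L i \<ge> 0" "pairwise_long L n a b c" "a \<in> {1..n}" "b \<in> {1..n}" "c \<in> {1..n}"
    and "gamma_adj L n v w"
  shows "cyc_order a b c v = cyc_order a b c w"
proof -
  from \<open>gamma_adj L n v w\<close> obtain A B C D m1 m2 where
    edge: "adm4 L n A B C D" and m: "m1 \<in> merges A B C D" "m2 \<in> merges A B C D"
    and adm: "adm3 L n m1" "adm3 L n m2" and cyc: "cyc_eq v m1" "cyc_eq w m2"
    unfolding gamma_adj_def by blast
  have "cyc_order a b c m1 = cyc_order a b c m2"
  proof (rule merges_cyc_order[OF _ _ _ _ _ _ _ _ _ m])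
    show "splits a b c m1" "splits a b c m2"
      using adm3_splits[OF assms(1,2)] adm by blast+
  qed (use edge assms(3-5) in \<open>simp_all add: adm4_def\<close>)
  with cyc show ?thesis by (simp add: cyc_eq_cyc_order)
qed

lemma gamma_connected_cyc_order:
  assumes "\<forall>i\<in>{1..n}. L i \<ge> 0" "pairwise_long L n a b c" "a \<in> {1..n}" "b \<in> {1..n}" "c \<in> {1..n}"
    and "gamma_connected L n v w"
  shows "cyc_order a b c v = cyc_order a b c w"
  using \<open>gamma_connected L n v w\<close> unfolding gamma_connected_def
proof (induction rule: rtranclp_induct)
  case (step x y)
  then show ?case
    using cyc_eq_cyc_order gamma_adj_cyc_order[OF assms(1-5)] by metis
qed simp

lemma cyc_order_mirror:
  assumes "a \<in> I \<union> J \<union> K" "b \<in> I \<union> J \<union> K" "c \<in> I \<union> J \<union> K"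
    and "I \<inter> J = {}" "J \<inter> K = {}" "I \<inter> K = {}" "splits a b c (I, J, K)"
  shows "cyc_order a b c (J, I, K) \<longleftrightarrow> \<not> cyc_order a b c (I, J, K)"
proof -
  have part: "(x \<in> I \<and> x \<notin> J \<and> x \<notin> K) \<or> (x \<notin> I \<and> x \<in> J \<and> x \<notin> K) \<or> (x \<notin> I \<and> x \<notin> J \<and> x \<in> K)"
    if "x \<in> I \<union> J \<union> K" for x
    using that assms(4-6) by blast
  show ?thesis
    using part[OF assms(1)] part[OF assms(2)] part[OF assms(3)] assms(7)
    unfolding cyc_order_def splits_def at_most_one_of_def
    by (elim disjE conjE) simp_all
qed

theorem mainTheorem7:
  fixes L :: "nat \<Rightarrow> real" and n a b c :: nat and I J K :: "nat set"
  assumes "n \<ge> 4"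
    and "\<forall>i\<in>{1..n}. L i > 0"
    and "\<forall>i\<in>{1..n}. L i < (\<Sum>j\<in>{1..n} - {i}. L j)"
    and "\<forall>S\<subseteq>{1..n}. (\<Sum>i\<in>S. L i) \<noteq> (\<Sum>i\<in>{1..n} - S. L i)"
    and "a \<in> {1..n}" "b \<in> {1..n}" "c \<in> {1..n}" "a \<noteq> b" "b \<noteq> c" "a \<noteq> c"
    and "L a \<ge> L b" "L b \<ge> L c"
    and "\<forall>i\<in>{1..n} - {a, b, c}. L i \<le> L c"
    and "L b + L c > total L n / 2"
    and "adm3 L n (I, J, K)"
  shows "\<not> gamma_connected L n (I, J, K) (J, I, K)"
proof
  assume connected: "gamma_connected L n (I, J, K) (J, I, K)"
  have nonneg: "\<forall>i\<in>{1..n}. L i \<ge> 0" using assms(2) by auto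
  have long: "pairwise_long L n a b c"
    using assms(8-12,14) unfolding pairwise_long_def short_def by auto
  have "I \<union> J \<union> K = {1..n}" "I \<inter> J = {}" "J \<inter> K = {}" "I \<inter> K = {}"
    using assms(15) unfolding adm3_def by auto
  then have "cyc_order a b c (J, I, K) \<longleftrightarrow> \<not> cyc_order a b c (I, J, K)"
    using cyc_order_mirror adm3_splits[OF nonneg long assms(15)] assms(5-7) by metis
  with gamma_connected_cyc_order[OF nonneg long assms(5-7) connected] show False by simp
qed

end
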